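(* Let $L>0$, $N\ge1$, and let $x=(x_1,\dots,x_{2N})\in(\mathbb{R}_{>0})^{2N}$ satisfy the highest weight condition and $\sum_{i=1}^{2N}x_i\le L$. Let $u$, $(\mu^{(i)})_{1\le i\le u}$ and $(N^{(i)})_{1\le i\le u}$ be produced by Algorithm II started from $x^{(1)}=x$. Then $$\sum_{i=1}^{u}N^{(i)}\mu^{(i)}\le \frac{L}{2}.$$ Equivalently, the Young diagram having $\nu^{(i)}=N^{(i)}-N^{(i+1)}$ rows of length $\lambda^{(i)}=\sum_{l\le i}\mu^{(l)}$ ($1\le i\le u$, with $N^{(u+1)}=0$) has area at most $L/2$.
   Context: Highest weight condition: a sequence $x_1,\dots,x_{2n}$ of nonnegative reals satisfies it if $\sum_{i=1}^k(x_{2i-1}-x_{2i})\ge0$ for all $1\le k\le n$. Algorithm II. Set $N^{(1)}=N$, $x^{(1)}=x$. Given $x^{(i)}=(x^{(i)}_1,\dots,x^{(i)}_{2N^{(i)}})$ of positive reals satisfying the highest weight condition: let $\mu^{(i)}=\min_j x^{(i)}_j$ and $y^{(i)}_j=x^{(i)}_j-\mu^{(i)}$. In the (linear, non-cyclic) array $y^{(i)}_1,\dots,y^{(i)}_{2N^{(i)}}$ consider the maximal runs of consecutive zeros (a lone zero counts as a run); say there are $k^{(i)}$ runs with lengths $n^{(i)}_1,\dots,n^{(i)}_{k^{(i)}}$. Let $N^{(i+1)}=N^{(i)}-\sum_{j}\lceil n^{(i)}_j/2\rceil$. If $N^{(i+1)}=0$, stop and set $u=i$. Otherwise form $x^{(i+1)}$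 from $y^{(i)}$: (a) if a run of zeros is at the left end, delete it; (b) for every run of zeros lying between positive entries $a,b$, delete the zeros if the run length is even, and if odd delete the zeros and also replace $a,b$ by the single entry $a+b$; (c') if a run of zeros is at the right end, preceded by a positive entry $a$, delete the zeros, and if its length is odd also delete $a$. Repeat with $x^{(i+1)}$. *)

theory Defs
  imports Main "HOL.Real"
begin

text \<open>Highest weight condition for a list x_1..x_{2n} (0-indexed here):
  for all 1 <= k <= n, sum_{i<k} (x_{2i} - x_{2i+1}) >= 0.\<close>
definition highest_weight :: "real list \<Rightarrow> bool" where
  "highest_weight x \<longleftrightarrow>
     (\<forall>k\<in>{1..length x div 2}. (\<Sum>i<k. x ! (2*i) - x ! (2*i+1)) \<ge> 0)"

function zero_runs :: "real list \<Rightarrow> nat list" where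
  "zero_runs [] = []"
| "zero_runs (v # ys) =
     (if v \<noteq> 0 then zero_runs ys
      else length (takeWhile (\<lambda>z. z = 0) (v # ys)) # zero_runs (dropWhile (\<lambda>z. z = 0) ys))"
  by pat_completeness auto
termination
  by (relation "measure length") (auto simp: le_imp_less_Suc length_dropWhile_le)

text \<open>Formation of x^(i+1) from y^(i), processing left to right; acc is the output built
  so far (its last entry is the current positive entry a, possibly already merged).
  (a) a leading zero run is deleted; (b) an interior run is deleted, and if odd its
  neighbours a, b are replaced by a+b; (c') a trailing run is deleted, and if odd the
  preceding entry is deleted as well.\<close>
function alg2_form :: "real list \<Rightarrow> real list \<Rightarrow> real list" where
  "alg2_form acc [] = acc"
| "alg2_form acc (v # ys) =
     (if v \<noteq> 0 then alg2_form (acc @ [v]) ys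
      else (let k = length (takeWhile (\<lambda>z. z = 0) (v # ys));
                r = dropWhile (\<lambda>z. z = 0) ys in
            if acc = [] then alg2_form [] r
            else if r = [] then (if even k then acc else butlast acc)
            else if even k then alg2_form acc r
            else alg2_form (butlast acc @ [last acc + hd r]) (tl r)))"
  by pat_completeness auto
termination
  by (relation "measure (\<lambda>(acc, ys). length ys)")
     (auto simp: le_imp_less_Suc length_dropWhile_le less_Suc_eq_le order.trans[OF diff_le_self])

definition alg2_step :: "nat \<times> real list \<Rightarrow> nat \<times> real list" where
  "alg2_step s = (let N = fst s; x = snd s; \<mu> = Min (set x);
                      y = map (\<lambda>t. t - \<mu>) x
                  in (N - sum_list (map (\<lambda>n. (n + 1) div 2) (zero_runs y)),
                      alg2_form [] y))"

text \<open>alg2_seq N x i = (N^(i+1), x^(i+1)) (0-indexed iteration).\<close>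
definition alg2_seq :: "nat \<Rightarrow> real list \<Rightarrow> nat \<Rightarrow> nat \<times> real list" where
  "alg2_seq N x i = (alg2_step ^^ i) (N, x)"

text \<open>mu^(i+1) in 0-indexed form.\<close>
definition alg2_mu :: "nat \<Rightarrow> real list \<Rightarrow> nat \<Rightarrow> real" where
  "alg2_mu N x i = Min (set (snd (alg2_seq N x i)))"

text \<open>u = the (1-indexed) step i at which N^(i+1) = 0.\<close>
definition alg2_u :: "nat \<Rightarrow> real list \<Rightarrow> nat" where
  "alg2_u N x = (LEAST i. fst (alg2_seq N x i) = 0)"

end

theory Submission
  imports Defs
begin

(* The bound holds for every number of steps of Algorithm II, not only up to u.  One step replaces x^(i) (length at least
   2 N^(i), positive entries) by x^(i+1) obtained from y^(i) = x^(i) - mu^(i).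
   Three properties of the formation procedure alg2_form are established first:
   it keeps entries positive, never increases the total sum, and shortens the list by at
   most 2 * sum_j ceil(n_j/2), which is exactly 2(N^(i) - N^(i+1)).  Hence each step
   preserves  2 N^(i) <= length x^(i)  with positive entries, and
     sum x^(i+1) <= sum y^(i) = sum x^(i) - length x^(i) * mu^(i) <= sum x^(i) - 2 N^(i) mu^(i).
   Telescoping gives  2 * sum_{i<n} N^(i) mu^(i) + sum x^(n+1) <= sum x  for every n, and
   the main theorem follows since sum x^(n+1) >= 0 and sum x <= L. *)

definition zero_pairs :: "real list \<Rightarrow> nat" where
  "zero_pairs ys = (\<Sum>n\<leftarrow>zero_runs ys. (n + 1) div 2)"

lemma zero_block:
  fixes ys :: "real list"
  assumes "v = 0"
    and k_def: "k = length (takeWhile (\<lambda>z. z = 0) (v # ys))"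
    and r_def: "r = dropWhile (\<lambda>z. z = 0) ys"
  shows "length (v # ys) = k + length r"
    and "sum_list (v # ys) = sum_list r"
    and "zero_pairs (v # ys) = (k + 1) div 2 + zero_pairs r"
    and "set r \<subseteq> set ys"
    and "r \<noteq> [] \<Longrightarrow> hd r \<noteq> 0"
proof -
  have split: "ys = takeWhile (\<lambda>z. z = 0) ys @ r"
    unfolding r_def by simp
  have zeros: "sum_list (takeWhile (\<lambda>z. z = 0) ys) = 0"
    by (induction ys) auto
  show "length (v # ys) = k + length r"
    using assms(1) arg_cong[OF split, of length] by (simp add: k_def)
  show "sum_list (v # ys) = sum_list r"
    using assms(1) arg_cong[OF split, of sum_list] zeros by simp
  show "zero_pairs (v # ys) = (k + 1) div 2 + zero_pairs r"
    using assms(1) by (simp add: zero_pairs_def k_def r_def)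
  show "set r \<subseteq> set ys"
    unfolding r_def by (auto dest: set_dropWhileD)
  show "r \<noteq> [] \<Longrightarrow> hd r \<noteq> 0"
    unfolding r_def using hd_dropWhile by blast
qed

lemma alg2_form_zero_block:
  fixes ys :: "real list"
  assumes "v = 0"
    and k_def: "k = length (takeWhile (\<lambda>z. z = 0) (v # ys))"
    and r_def: "r = dropWhile (\<lambda>z. z = 0) ys"
  shows "alg2_form acc (v # ys) =
           (if acc = [] then alg2_form [] r
            else if r = [] then (if even k then acc else butlast acc)
            else if even k then alg2_form acc r
            else alg2_form (butlast acc @ [last acc + hd r]) (tl r))"
  using assms(1) unfolding k_def r_def by (simp only: alg2_form.simps Let_def) simp

lemma alg2_form_nonzero_Cons: "v \<noteq> 0 \<Longrightarrow> alg2_form acc (v # ys) = alg2_form (acc @ [v]) ys"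
  by simp

text \<open>From here on alg2_form on a nonempty list is unfolded only through the two
  lemmas above, which keeps the case analysis on zero runs explicit.\<close>
declare alg2_form.simps(2) [simp del]

lemma sum_list_butlast_last:
  "xs \<noteq> [] \<Longrightarrow> sum_list xs = sum_list (butlast xs) + last xs"
  by (metis append_butlast_last_id add.right_neutral sum_list.Cons sum_list.Nil sum_list_append)

lemma zero_pairs_nonzero_Cons: "a \<noteq> 0 \<Longrightarrow> zero_pairs (a # r) = zero_pairs r"
  by (simp add: zero_pairs_def)

lemma alg2_form_pos:
  "\<forall>t\<in>set acc. t > 0 \<Longrightarrow> \<forall>t\<in>set ys. t \<ge> 0 \<Longrightarrow> \<forall>t\<in>set (alg2_form acc ys). t > 0"
proof (induction acc ys rule: alg2_form.induct)
  case (1 acc)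
  then show ?case by simp
next
  case (2 acc v ys)
  show ?case
  proof (cases "v = 0")
    case False
    then show ?thesis using "2.IH"(1) "2.prems" by (force simp: alg2_form_nonzero_Cons)
  next
    case True
    define k where "k = length (takeWhile (\<lambda>z. z = (0::real)) (v # ys))"
    define r where "r = dropWhile (\<lambda>z. z = (0::real)) ys"
    have r_nonneg: "\<forall>t\<in>set r. t \<ge> 0"
      using zero_block(4)[OF True k_def r_def] "2.prems"(2) by auto
    have butlast_pos: "\<forall>t\<in>set (butlast acc). t > 0"
      using "2.prems"(1) by (auto dest: in_set_butlastD)
    note IH = "2.IH"(2-4)[OF _ k_def r_def]
    note form = alg2_form_zero_block[OF True k_def r_def]
    consider (leading) "acc = []" | (trailing) "acc \<noteq> []" "r = []"
      | (even) "acc \<noteq> []" "r \<noteq> []" "even k" | (odd) "acc \<noteq> []" "r \<noteq> []" "odd k"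
      by blast
    then show ?thesis
    proof cases
      case leading
      then show ?thesis using IH(1) True r_nonneg form by simp
    next
      case trailing
      then show ?thesis using "2.prems"(1) butlast_pos form by simp
    next
      case even
      then show ?thesis using IH(2) True "2.prems"(1) r_nonneg form by simp
    next
      case odd
      have "hd r \<noteq> 0"
        using zero_block(5)[OF True k_def r_def] odd by blast
      moreover have "hd r \<in> set r" using odd by simp
      ultimately have "hd r > 0" using r_nonneg by force
      moreover have "last acc > 0" using "2.prems"(1) odd by simp
      ultimately have "\<forall>t\<in>set (butlast acc @ [last acc + hd r]). t > 0"
        using butlast_pos by auto
      moreover have "\<forall>t\<in>set (tl r). t \<ge> 0"
        using r_nonneg list.set_sel(2)[OF \<open>r \<noteq> []\<close>] by blast
      ultimately have "\<forall>t\<in>set (alg2_form (butlast acc @ [last acc + hd r]) (tl r)). t > 0"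
        using IH(3) True odd by blast
      moreover have "alg2_form acc (v # ys) = alg2_form (butlast acc @ [last acc + hd r]) (tl r)"
        unfolding form using odd by simp
      ultimately show ?thesis by simp
    qed
  qed
qed

text \<open>The formation step never increases the total sum: zeros are deleted, merging
  keeps the sum, and a deleted final entry is nonnegative.\<close>
lemma alg2_form_sum:
  "\<forall>t\<in>set acc. t \<ge> 0 \<Longrightarrow> \<forall>t\<in>set ys. t \<ge> 0 \<Longrightarrow>
     sum_list (alg2_form acc ys) \<le> sum_list acc + sum_list ys"
proof (induction acc ys rule: alg2_form.induct)
  case (1 acc)
  then show ?case by simp
next
  case (2 acc v ys)
  show ?case
  proof (cases "v = 0")
    case False
    then show ?thesis using "2.IH"(1) "2.prems" by (simp add: alg2_form_nonzero_Cons)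
  next
    case True
    define k where "k = length (takeWhile (\<lambda>z. z = (0::real)) (v # ys))"
    define r where "r = dropWhile (\<lambda>z. z = (0::real)) ys"
    have r_nonneg: "\<forall>t\<in>set r. t \<ge> 0"
      using zero_block(4)[OF True k_def r_def] "2.prems"(2) by auto
    have sum_eq: "sum_list (v # ys) = sum_list r"
      using zero_block(2)[OF True k_def r_def] .
    note IH = "2.IH"(2-4)[OF _ k_def r_def]
    note form = alg2_form_zero_block[OF True k_def r_def]
    consider (leading) "acc = []" | (trailing) "acc \<noteq> []" "r = []"
      | (even) "acc \<noteq> []" "r \<noteq> []" "even k" | (odd) "acc \<noteq> []" "r \<noteq> []" "odd k"
      by blast
    then show ?thesis
    proof cases
      case leading
      then show ?thesis using IH(1) True r_nonneg sum_eq form by simp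
    next
      case trailing
      have "last acc \<ge> 0" using "2.prems"(1) trailing by simp
      then show ?thesis
        using trailing sum_eq form sum_list_butlast_last[of acc] by auto
    next
      case even
      then show ?thesis using IH(2) True "2.prems"(1) r_nonneg sum_eq form by simp
    next
      case odd
      let ?acc' = "butlast acc @ [last acc + hd r]"
      have "\<forall>t\<in>set ?acc'. t \<ge> 0"
        using "2.prems"(1) odd r_nonneg by (auto dest: in_set_butlastD)
      then have "sum_list (alg2_form ?acc' (tl r)) \<le> sum_list ?acc' + sum_list (tl r)"
        using IH(3) True odd r_nonneg by (auto dest: list.set_sel(2))
      also have "\<dots> = sum_list acc + sum_list r"
        using odd sum_list_butlast_last[of acc] by (cases r) auto
      finally show ?thesis using odd sum_eq form by simp
    qed
  qed
qed

text \<open>The formation step shortens the list by at most twice the number of deleted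
  pairs: a zero run of length k costs at most k + 1 entries when k is odd.\<close>
lemma alg2_form_length:
  "length acc + length ys \<le> length (alg2_form acc ys) + 2 * zero_pairs ys"
proof (induction acc ys rule: alg2_form.induct)
  case (1 acc)
  then show ?case by (simp add: zero_pairs_def)
next
  case (2 acc v ys)
  show ?case
  proof (cases "v = 0")
    case False
    then show ?thesis
      using "2.IH"(1) by (simp add: zero_pairs_nonzero_Cons alg2_form_nonzero_Cons)
  next
    case True
    define k where "k = length (takeWhile (\<lambda>z. z = (0::real)) (v # ys))"
    define r where "r = dropWhile (\<lambda>z. z = (0::real)) ys"
    have len: "length (v # ys) = k + length r"
      using zero_block(1)[OF True k_def r_def] .
    have pairs: "zero_pairs (v # ys) = (k + 1) div 2 + zero_pairs r"
      using zero_block(3)[OF True k_def r_def] .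
    have k_le: "k \<le> 2 * ((k + 1) div 2)" by simp
    note IH = "2.IH"(2-4)[OF _ k_def r_def]
    note form = alg2_form_zero_block[OF True k_def r_def]
    consider (leading) "acc = []" | (trailing) "acc \<noteq> []" "r = []"
      | (even) "acc \<noteq> []" "r \<noteq> []" "even k" | (odd) "acc \<noteq> []" "r \<noteq> []" "odd k"
      by blast
    then show ?thesis
    proof cases
      case leading
      then show ?thesis using IH(1) True len pairs k_le form by simp
    next
      case trailing
      then show ?thesis using len pairs k_le form by (auto simp: zero_pairs_def)
    next
      case even
      then show ?thesis using IH(2) True len pairs k_le form by simp
    next
      case odd
      have "zero_pairs r = zero_pairs (tl r)"
        using zero_block(5)[OF True k_def r_def] odd zero_pairs_nonzero_Cons[of "hd r" "tl r"]
        by simp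
      moreover have "k + 1 = 2 * ((k + 1) div 2)" using odd by presburger
      ultimately show ?thesis using IH(3) True odd len pairs form by (cases r) auto
    qed
  qed
qed

definition admissible :: "nat \<times> real list \<Rightarrow> bool" where
  "admissible s \<longleftrightarrow> (\<forall>t\<in>set (snd s). t > 0) \<and> 2 * fst s \<le> length (snd s)"

lemma alg2_step_eq:
  "alg2_step (N, X) = (N - zero_pairs (map (\<lambda>t. t - Min (set X)) X),
                       alg2_form [] (map (\<lambda>t. t - Min (set X)) X))"
  by (simp add: alg2_step_def zero_pairs_def Let_def)

lemma shifted_nonneg: "\<forall>t\<in>set (map (\<lambda>t. t - Min (set X)) X). t \<ge> (0::real)"
  by auto

lemma admissible_step:
  assumes "admissible (N, X)"
  shows "admissible (alg2_step (N, X))"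
  using assms alg2_form_pos[of "[]", OF _ shifted_nonneg, of X]
    alg2_form_length[of "[]" "map (\<lambda>t. t - Min (set X)) X"]
  by (auto simp: admissible_def alg2_step_eq)

text \<open>One step removes at least 2 N mu from the total sum: subtracting mu from every
  entry removes length(x) * mu >= 2 N mu, and the formation step does not add to it.\<close>
lemma alg2_step_sum:
  assumes "admissible (N, X)"
  shows "sum_list (snd (alg2_step (N, X))) + 2 * real N * Min (set X) \<le> sum_list X"
proof (cases "X = []")
  case True
  then show ?thesis using assms by (simp add: admissible_def alg2_step_def)
next
  case False
  define \<mu> where "\<mu> = Min (set X)"
  have "\<mu> > 0" using assms False unfolding admissible_def \<mu>_def by simp
  then have "real (2 * N) * \<mu> \<le> real (length X) * \<mu>"
    using assms by (intro mult_right_mono) (auto simp: admissible_def)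
  moreover have "sum_list (map (\<lambda>t. t - \<mu>) X) = sum_list X - real (length X) * \<mu>"
    by (induction X) (auto simp: algebra_simps)
  moreover have "sum_list (snd (alg2_step (N, X))) \<le> sum_list (map (\<lambda>t. t - \<mu>) X)"
    using alg2_form_sum[of "[]", OF _ shifted_nonneg] by (simp add: alg2_step_eq \<mu>_def)
  ultimately show ?thesis unfolding \<mu>_def by simp
qed

lemma alg2_seq_Suc: "alg2_seq N x (Suc i) = alg2_step (alg2_seq N x i)"
  unfolding alg2_seq_def by simp

lemma admissible_seq: "admissible (N, x) \<Longrightarrow> admissible (alg2_seq N x n)"
proof (induction n)
  case (Suc n)
  then show ?case using admissible_step[of "fst (alg2_seq N x n)" "snd (alg2_seq N x n)"]
    by (simp add: alg2_seq_Suc)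
qed (simp add: alg2_seq_def)

lemma alg2_area_telescope:
  assumes "admissible (N, x)"
  shows "2 * (\<Sum>i<n. real (fst (alg2_seq N x i)) * alg2_mu N x i)
           + sum_list (snd (alg2_seq N x n)) \<le> sum_list x"
proof (induction n)
  case 0
  then show ?case by (simp add: alg2_seq_def)
next
  case (Suc n)
  obtain M X where MX: "alg2_seq N x n = (M, X)" by fastforce
  have "sum_list (snd (alg2_seq N x (Suc n))) + 2 * real M * alg2_mu N x n \<le> sum_list X"
    using alg2_step_sum admissible_seq[OF assms, of n]
    by (simp add: MX alg2_seq_Suc alg2_mu_def)
  then show ?case using Suc.IH by (simp add: MX algebra_simps)
qed

theorem mainTheorem9:
  fixes L :: real and N :: nat and x :: "real list"
  assumes "L > 0" and "N \<ge> 1" and "length x = 2 * N"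
    and "\<forall>t\<in>set x. t > 0"
    and "highest_weight x"
    and "sum_list x \<le> L"
  shows "(\<Sum>i<alg2_u N x. real (fst (alg2_seq N x i)) * alg2_mu N x i) \<le> L / 2"
proof -
  let ?u = "alg2_u N x"
  have adm: "admissible (N, x)"
    using assms(3,4) by (simp add: admissible_def)
  have "sum_list (snd (alg2_seq N x ?u)) \<ge> 0"
    using admissible_seq[OF adm, of ?u] by (intro sum_list_nonneg) (auto simp: admissible_def)
  then show ?thesis
    using alg2_area_telescope[OF adm, of ?u] assms(6) by linarith
qed

end
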